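(* Fix $\sigma\in(0,\tfrac12)$. There exist $\lambda^{*}>0$ and $s^{*}\in(0,1)$ such that: (i) for all $\lambda\in(0,\lambda^{*})$, $\mathcal{I}^0_\lambda=(0,1)$; (ii) for $\lambda=\lambda^{*}$, $\mathcal{I}^0_\lambda=(0,1)\setminus\{s^{*}\}$; (iii) for all $\lambda>\lambda^{*}$ there exist $s_0,s_1\in(0,1)$ with $s_0<s^{*}<s_1$ such that $\mathcal{I}^0_\lambda=(0,s_0)\cup(s_1,1)$.
   Context: Let $g(s)=s^2(1-s)$ and $G(u)=u^3/3-u^4/4$ on $[0,1]$. For $\lambda>0$ and $s\in(0,1)$, let $(u_s,v_s)$ be the unique solution, on its maximal interval of existence, of $u'=v$, $v'=-\lambda g(u)$, $u(0)=s$, $v(0)=0$. Let $T_0(s)=T_0(s,\lambda)$ denote the time taken by $(u_s,v_s)$ to go from the point $(s,0)$ to the half-line $\{0\}\times(-\infty,0)$ moving forward along the level line $v^2+2\lambda G(u)=2\lambda G(s)$. Set $\mathcal{I}^0_\lambda=\{s\in(0,1): T_0(s)>\sigma\}$. *)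

theory Defs
  imports "HOL-Analysis.Analysis"
begin

definition g :: "real \<Rightarrow> real" where
  "g s = s^2 * (1 - s)"

definition G :: "real \<Rightarrow> real" where
  "G u = u^3/3 - u^4/4"

definition is_sol :: "real \<Rightarrow> real \<Rightarrow> real \<Rightarrow> (real \<Rightarrow> real) \<Rightarrow> (real \<Rightarrow> real) \<Rightarrow> bool" where
  "is_sol lam s t u v \<longleftrightarrow> u 0 = s \<and> v 0 = 0 \<and>
     (\<forall>\<tau>\<in>{0..t}. (u has_real_derivative v \<tau>) (at \<tau> within {0..t}) \<and>
                  (v has_real_derivative (- lam * g (u \<tau>))) (at \<tau> within {0..t}))"

definition T0 :: "real \<Rightarrow> real \<Rightarrow> real" where
  "T0 lam s = (THE t. t > 0 \<and> (\<exists>u v. is_sol lam s t u v \<and> u t = 0 \<and> v t < 0 \<and>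
                  (\<forall>\<tau>\<in>{0..<t}. u \<tau> \<noteq> 0 \<or> v \<tau> \<ge> 0)))"

definition I0 :: "real \<Rightarrow> real \<Rightarrow> real set" where
  "I0 \<sigma> lam = {s \<in> {0<..<1}. T0 lam s > \<sigma>}"

end

theory Submission
  imports Defs "HOL-Real_Asymp.Real_Asymp"
begin

text \<open>Substituting \<open>u = s (1 - y^2)\<close>, conservation of the energy \<open>v^2 + 2 lam G(u)\<close>
  turns the motion from \<open>(s,0)\<close> to the half-line into the scalar equation
  \<open>y' = sqrt (lam s N(s,y) / 2)\<close> on \<open>[0,1]\<close>, where \<open>N = energy_gap\<close> is a polynomial that is
  positive for \<open>s < 1\<close> and affine in \<open>s\<close>. Separating variables gives
  \<open>T0(s,lam) = sqrt (2/lam) R(s)\<close> with \<open>R(s) = F(s) / sqrt s\<close> (\<open>scaled_time\<close>) and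
  \<open>F(s)\<close> (\<open>time_integral\<close>) the integral of \<open>N(s,y)^(-1/2)\<close> over \<open>y \<in> [0,1]\<close>.
  Since \<open>N\<close> is affine in \<open>s\<close>, \<open>F\<close> is convex; since \<open>sqrt\<close> is strictly concave, the ratio \<open>R\<close>
  is strictly quasiconvex, and it tends to infinity at \<open>0\<close> and at \<open>1\<close>. So \<open>R\<close> has a unique
  minimiser \<open>s*\<close>, and the superlevel set \<open>{R > c}\<close> is all of \<open>(0,1)\<close>, \<open>(0,1)\<close> without \<open>s*\<close>,
  or a union of two end intervals according as \<open>c\<close> is below, equal to or above \<open>R(s*)\<close>;
  \<open>lam*\<close> is the value with \<open>\<sigma> sqrt (lam*/2) = R(s*)\<close>.\<close>

section \<open>Strictly quasiconvex functions\<close>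

lemma sqrt_convex_comb_less:
  assumes "0 \<le> x" "0 \<le> z" "x \<noteq> z" "0 < t" "t < 1"
  shows "(1 - t) * sqrt x + t * sqrt z < sqrt ((1 - t) * x + t * z)"
proof (rule real_less_rsqrt)
  have "x = (sqrt x)^2" "z = (sqrt z)^2" using assms by simp_all
  then have "((1 - t) * x + t * z) - ((1 - t) * sqrt x + t * sqrt z)^2 = t * (1 - t) * (sqrt x - sqrt z)^2"
    by (simp add: algebra_simps power2_eq_square)
  moreover have "0 < t * (1 - t) * (sqrt x - sqrt z)^2" using assms by simp
  ultimately show "((1 - t) * sqrt x + t * sqrt z)^2 < (1 - t) * x + t * z" by linarith
qed

definition strictly_quasiconvex_on :: "real set \<Rightarrow> (real \<Rightarrow> real) \<Rightarrow> bool" where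
  "strictly_quasiconvex_on I f \<longleftrightarrow>
     (\<forall>x\<in>I. \<forall>y\<in>I. \<forall>z\<in>I. x < y \<longrightarrow> y < z \<longrightarrow> f y < max (f x) (f z))"

lemma strictly_quasiconvex_onD:
  "strictly_quasiconvex_on I f \<Longrightarrow> x \<in> I \<Longrightarrow> y \<in> I \<Longrightarrow> z \<in> I \<Longrightarrow> x < y \<Longrightarrow> y < z
    \<Longrightarrow> f y < max (f x) (f z)"
  unfolding strictly_quasiconvex_on_def by blast

lemma strictly_quasiconvex_on_div_sqrt:
  assumes F: "convex_on I F" and I: "I \<subseteq> {0<..}" and pos: "\<And>x. x \<in> I \<Longrightarrow> 0 < F x"
  shows "strictly_quasiconvex_on I (\<lambda>x. F x / sqrt x)"
  unfolding strictly_quasiconvex_on_def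
proof (intro ballI impI)
  fix x y z assume xyz: "x \<in> I" "y \<in> I" "z \<in> I" "x < y" "y < z"
  define t where "t = (y - x) / (z - x)"
  define c where "c = max (F x / sqrt x) (F z / sqrt z)"
  have t: "0 < t" "t < 1" using xyz by (auto simp: t_def divide_simps)
  have "y = x + t * (z - x)" using xyz by (simp add: t_def)
  then have y: "y = (1 - t) * x + t * z" by (simp add: algebra_simps)
  have pos_xz: "0 < x" "0 < z" using I xyz by auto
  then have c: "0 < c" using pos xyz by (simp add: c_def less_max_iff_disj)
  have "F x / sqrt x \<le> c" "F z / sqrt z \<le> c" by (simp_all add: c_def)
  then have "F x \<le> c * sqrt x" "F z \<le> c * sqrt z"
    using pos_xz by (simp_all add: pos_divide_le_eq)
  then have "(1 - t) * F x + t * F z \<le> c * ((1 - t) * sqrt x + t * sqrt z)"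
    using t by (simp add: distrib_left mult.left_commute add_mono)
  also have "\<dots> < c * sqrt y"
    unfolding y using sqrt_convex_comb_less[of x z t] pos_xz xyz t c by simp
  finally have "F y < c * sqrt y"
    using convex_onD[OF F, of t x z] xyz t y by simp
  then show "F y / sqrt y < c" using pos_xz xyz by (simp add: divide_less_eq)
qed

lemma filterlim_at_top_at_rightE:
  fixes f :: "real \<Rightarrow> real"
  assumes "filterlim f at_top (at_right a)"
  obtains p where "a < p" "\<And>x. a < x \<Longrightarrow> x < p \<Longrightarrow> c < f x"
  using assms unfolding filterlim_at_top_dense eventually_at_right_field by blast

lemma filterlim_at_top_at_leftE:
  fixes f :: "real \<Rightarrow> real"
  assumes "filterlim f at_top (at_left b)"
  obtains q where "q < b" "\<And>x. q < x \<Longrightarrow> x < b \<Longrightarrow> c < f x"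
  using assms unfolding filterlim_at_top_dense eventually_at_left_field by blast

lemma coercive_attains_min:
  fixes f :: "real \<Rightarrow> real"
  assumes "a < b" "continuous_on {a<..<b} f"
    and "filterlim f at_top (at_right a)" "filterlim f at_top (at_left b)"
  obtains m where "m \<in> {a<..<b}" "\<And>x. x \<in> {a<..<b} \<Longrightarrow> f m \<le> f x"
proof -
  define mid where "mid = (a + b) / 2"
  obtain p where p: "a < p" "\<And>x. a < x \<Longrightarrow> x < p \<Longrightarrow> f mid < f x"
    using filterlim_at_top_at_rightE[OF assms(3)] by blast
  obtain q where q: "q < b" "\<And>x. q < x \<Longrightarrow> x < b \<Longrightarrow> f mid < f x"
    using filterlim_at_top_at_leftE[OF assms(4)] by blast
  define K where "K = {min p mid..max q mid}"
  have "a < min p mid" "max q mid < b" using p(1) q(1) assms(1) by (auto simp: mid_def)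
  then have K: "K \<subseteq> {a<..<b}" "mid \<in> K" "K \<noteq> {}" by (auto simp: K_def)
  obtain m where m: "m \<in> K" "\<And>x. x \<in> K \<Longrightarrow> f m \<le> f x"
    using continuous_attains_inf[of K f] continuous_on_subset[OF assms(2) K(1)] K(3)
    by (auto simp: K_def)
  have "f m \<le> f x" if "x \<in> {a<..<b}" for x
  proof (cases "x \<in> K")
    case False
    then have "f mid < f x" using that p q by (force simp: K_def)
    then show ?thesis using m(2)[OF K(2)] by linarith
  qed (use m in blast)
  then show ?thesis using that m K by blast
qed

lemma strictly_quasiconvex_on_min_unique:
  assumes "strictly_quasiconvex_on I f" "convex I" "m \<in> I" "\<And>x. x \<in> I \<Longrightarrow> f m \<le> f x"
    and "x \<in> I" "x \<noteq> m"
  shows "f m < f x"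
proof -
  define y where "y = (x + m) / 2"
  have "y \<in> I" using convexD[OF assms(2,5,3), of "1/2" "1/2"] by (simp add: y_def field_simps)
  moreover have "min x m < y" "y < max x m" using assms(6) by (auto simp: y_def)
  ultimately have "f y < max (f x) (f m) \<or> f y < max (f m) (f x)"
    using strictly_quasiconvex_onD[OF assms(1)] assms(3,5) by (cases "x < m") auto
  then show ?thesis using assms(4)[OF \<open>y \<in> I\<close>] by (auto simp: max_def split: if_splits)
qed

lemma strictly_quasiconvex_superlevel_set:
  fixes f :: "real \<Rightarrow> real"
  assumes sqc: "strictly_quasiconvex_on {a<..<b} f" and cont: "continuous_on {a<..<b} f"
    and lim_a: "filterlim f at_top (at_right a)" and lim_b: "filterlim f at_top (at_left b)"
    and m: "m \<in> {a<..<b}" "\<And>x. x \<in> {a<..<b} \<Longrightarrow> f m \<le> f x" and c: "f m < c"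
  obtains s0 s1 where "a < s0" "s0 < m" "m < s1" "s1 < b"
    "{x \<in> {a<..<b}. c < f x} = {a<..<s0} \<union> {s1<..<b}"
proof -
  obtain p where p: "a < p" "\<And>x. a < x \<Longrightarrow> x < p \<Longrightarrow> c < f x"
    using filterlim_at_top_at_rightE[OF lim_a] by blast
  obtain q where q: "q < b" "\<And>x. q < x \<Longrightarrow> x < b \<Longrightarrow> c < f x"
    using filterlim_at_top_at_leftE[OF lim_b] by blast
  define x0 where "x0 = (a + min p m) / 2"
  define x1 where "x1 = (b + max q m) / 2"
  have x0: "a < x0" "x0 < m" "c < f x0" using p m(1) by (auto simp: x0_def)
  have x1: "m < x1" "x1 < b" "c < f x1" using q m(1) by (auto simp: x1_def)
  have "{x0..m} \<subseteq> {a<..<b}" "{m..x1} \<subseteq> {a<..<b}" using x0 x1 m(1) by auto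
  then have "continuous_on {x0..m} f" "continuous_on {m..x1} f"
    using continuous_on_subset[OF cont] by blast+
  then obtain s0 s1 where s0: "x0 \<le> s0" "s0 \<le> m" "f s0 = c" and s1: "m \<le> s1" "s1 \<le> x1" "f s1 = c"
    using IVT2'[of f m c x0] IVT'[of f m c x1] x0 x1 c by auto
  have "s0 \<noteq> m" "s1 \<noteq> m" using s0 s1 c by auto
  then have s01: "a < s0" "s0 < m" "m < s1" "s1 < b" using s0 s1 x0 x1 by auto
  have "c < f x \<longleftrightarrow> x < s0 \<or> s1 < x" if x: "x \<in> {a<..<b}" for x
  proof (cases "x < s0 \<or> s1 < x")
    case True
    then have "f s0 < max (f x) (f m) \<or> f s1 < max (f m) (f x)"
      using strictly_quasiconvex_onD[OF sqc] x m(1) s01 by auto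
    then show ?thesis using True s0 s1 c by auto
  next
    case False
    then have "x = s0 \<or> x = s1 \<or> f x < max (f s0) (f s1)"
      using strictly_quasiconvex_onD[OF sqc, of s0 x s1] x s01 by force
    then show ?thesis using False s0 s1 by auto
  qed
  then have "{x \<in> {a<..<b}. c < f x} = {a<..<s0} \<union> {s1<..<b}"
    using s01 by (auto intro!: set_eqI)
  then show ?thesis using that s01 by blast
qed

lemma coercive_strictly_quasiconvex_superlevel_sets:
  fixes f :: "real \<Rightarrow> real"
  assumes sqc: "strictly_quasiconvex_on {a<..<b} f" and cont: "continuous_on {a<..<b} f"
    and lim_a: "filterlim f at_top (at_right a)" and lim_b: "filterlim f at_top (at_left b)"
    and "a < b"
  obtains m where "m \<in> {a<..<b}"
    "\<And>c. c < f m \<Longrightarrow> {x \<in> {a<..<b}. c < f x} = {a<..<b}"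
    "{x \<in> {a<..<b}. f m < f x} = {a<..<b} - {m}"
    "\<And>c. f m < c \<Longrightarrow> \<exists>s0 s1. a < s0 \<and> s0 < m \<and> m < s1 \<and> s1 < b \<and>
                         {x \<in> {a<..<b}. c < f x} = {a<..<s0} \<union> {s1<..<b}"
proof -
  obtain m where m: "m \<in> {a<..<b}" "\<And>x. x \<in> {a<..<b} \<Longrightarrow> f m \<le> f x"
    using coercive_attains_min[OF \<open>a < b\<close> cont lim_a lim_b] by blast
  show ?thesis
  proof (rule that[OF m(1)])
    show "{x \<in> {a<..<b}. c < f x} = {a<..<b}" if "c < f m" for c
      using m(2) that by fastforce
    show "{x \<in> {a<..<b}. f m < f x} = {a<..<b} - {m}"
      using strictly_quasiconvex_on_min_unique[OF sqc _ m] by auto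
    show "\<exists>s0 s1. a < s0 \<and> s0 < m \<and> m < s1 \<and> s1 < b \<and>
                 {x \<in> {a<..<b}. c < f x} = {a<..<s0} \<union> {s1<..<b}" if "f m < c" for c
      using strictly_quasiconvex_superlevel_set[OF sqc cont lim_a lim_b m that] by metis
  qed
qed

section \<open>Transit time of an autonomous equation\<close>

definition transit_time :: "(real \<Rightarrow> real) \<Rightarrow> real \<Rightarrow> real \<Rightarrow> real" where
  "transit_time r a b = integral {a..b} (\<lambda>z. 1 / r z)"

lemma transit_time_has_real_derivative:
  assumes "continuous_on {a..b} r" "\<And>z. z \<in> {a..b} \<Longrightarrow> 0 < r z" "z \<in> {a..b}"
  shows "((\<lambda>z. transit_time r a z) has_real_derivative 1 / r z) (at z within {a..b})"
  unfolding transit_time_def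
  using assms by (intro integral_has_real_derivative continuous_intros) force+

lemma transit_time_strict_mono:
  assumes "continuous_on {a..b} r" "\<And>z. z \<in> {a..b} \<Longrightarrow> 0 < r z" "a \<le> z" "z < w" "w \<le> b"
  shows "transit_time r a z < transit_time r a w"
proof (rule DERIV_pos_imp_increasing_open[OF assms(4)])
  fix x assume "z < x" "x < w"
  then show "\<exists>d. ((\<lambda>z. transit_time r a z) has_real_derivative d) (at x) \<and> 0 < d"
    using transit_time_has_real_derivative[OF assms(1,2), of x] assms(2)[of x] assms(3,5)
    by (auto simp: at_within_Icc_at)
next
  have "continuous_on {a..b} (\<lambda>z. transit_time r a z)"
    using transit_time_has_real_derivative[OF assms(1,2)] by (rule DERIV_continuous_on)
  then show "continuous_on {z..w} (\<lambda>z. transit_time r a z)"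
    by (rule continuous_on_subset) (use assms in auto)
qed

lemma transit_time_unique:
  assumes r: "continuous_on {a..b} r" "\<And>z. z \<in> {a..b} \<Longrightarrow> 0 < r z"
    and y: "continuous_on {0..t} y" "\<And>x. x \<in> {0..t} \<Longrightarrow> y x \<in> {a..b}"
      "\<And>x. 0 < x \<Longrightarrow> x < t \<Longrightarrow> (y has_real_derivative r (y x)) (at x)"
      "y 0 = a" "y t = b" "0 \<le> t"
  shows "t = transit_time r a b"
proof -
  let ?T = "\<lambda>z. transit_time r a z"
  have "continuous_on {a..b} ?T"
    using transit_time_has_real_derivative[OF r] by (rule DERIV_continuous_on)
  then have cont: "continuous_on {0..t} (\<lambda>x. ?T (y x) - x)"
    using y(2) by (intro continuous_intros continuous_on_compose2[OF _ y(1)]) auto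
  have "((\<lambda>x. ?T (y x) - x) has_real_derivative 0) (at x)" if x: "0 < x" "x < t" for x
  proof -
    have x': "x \<in> {0..t}" using x by simp
    have "y ` {0<..<t} \<subseteq> {a..b}" using y(2) by auto
    with transit_time_has_real_derivative[OF r y(2)[OF x']]
    have "(?T has_real_derivative 1 / r (y x)) (at (y x) within y ` {0<..<t})"
      by (rule DERIV_subset)
    from DERIV_image_chain[OF this y(3)[OF x, THEN DERIV_subset]]
    have "((?T \<circ> y) has_real_derivative 1 / r (y x) * r (y x)) (at x within {0<..<t})"
      by simp
    moreover have "0 < r (y x)" using r(2)[OF y(2)[OF x']] .
    ultimately have "((\<lambda>x. ?T (y x)) has_real_derivative 1) (at x)"
      using x by (simp add: o_def at_within_open[of x "{0<..<t}"])
    then show ?thesis by (auto intro!: derivative_eq_intros)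
  qed
  from DERIV_isconst_end[OF _ cont this] y(4-6)
  show ?thesis by (cases "t = 0") (auto simp: transit_time_def)
qed

lemma transit_time_solution:
  assumes "a \<le> b" and r: "continuous_on {a..b} r" "\<And>z. z \<in> {a..b} \<Longrightarrow> 0 < r z"
  defines "T \<equiv> transit_time r a b"
  obtains y where "y 0 = a" "y T = b" "\<And>x. x \<in> {0..<T} \<Longrightarrow> y x < b"
    "\<And>x. x \<in> {0..T} \<Longrightarrow> y x \<in> {a..b} \<and> (y has_real_derivative r (y x)) (at x within {0..T})"
proof -
  let ?T = "\<lambda>z. transit_time r a z"
  define y where "y = inv_into {a..b} ?T"
  have dT: "(?T has_real_derivative 1 / r z) (at z within {a..b})" if "z \<in> {a..b}" for z
    using transit_time_has_real_derivative[OF r that] .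
  have cont: "continuous_on {a..b} ?T" using dT by (rule DERIV_continuous_on)
  have mono: "?T z < ?T w" if "a \<le> z" "z < w" "w \<le> b" for z w
    using transit_time_strict_mono[OF r that] .
  then have "strict_mono_on {a..b} ?T" by (intro strict_mono_onI) auto
  then have inj: "inj_on ?T {a..b}" by (rule strict_mono_on_imp_inj_on)
  have T0: "?T a = 0" by (simp add: transit_time_def)
  have image: "?T ` {a..b} = {0..T}"
  proof
    show "?T ` {a..b} \<subseteq> {0..T}"
      using mono T0 by (force simp: T_def le_less)
    show "{0..T} \<subseteq> ?T ` {a..b}"
      using IVT'[of ?T a _ b] cont T0 \<open>a \<le> b\<close> by (force simp: T_def)
  qed
  have y_T: "y (?T z) = z" if "z \<in> {a..b}" for z
    using inj that by (simp add: y_def)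
  have T_y: "?T (y x) = x" "y x \<in> {a..b}" if "x \<in> {0..T}" for x
    using that image f_inv_into_f[of x ?T "{a..b}"] inv_into_into[of x ?T "{a..b}"]
    by (auto simp: y_def)
  have cont_y: "continuous_on {0..T} y"
    using continuous_on_inv[OF cont compact_Icc] y_T image by simp
  have dy: "(y has_real_derivative r (y x)) (at x within {0..T})" if x: "x \<in> {0..T}" for x
  proof -
    have "0 < r (y x)" using r(2) T_y(2)[OF x] .
    have "(y has_derivative (*) (r (y x))) (at (?T (y x)) within ?T ` {a..b})"
    proof (rule has_derivative_inverse_within)
      show "(?T has_derivative (*) (1 / r (y x))) (at (y x) within {a..b})"
        using dT[OF T_y(2)[OF x]] by (simp add: has_field_derivative_def)
      show "continuous (at (?T (y x)) within ?T ` {a..b}) y"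
        using cont_y x T_y(1)[OF x] image by (simp add: continuous_on_eq_continuous_within)
      show "(*) (r (y x)) \<circ> (*) (1 / r (y x)) = id"
        using \<open>0 < r (y x)\<close> by (auto simp: fun_eq_iff)
    qed (use T_y(2)[OF x] y_T in \<open>auto intro: bounded_linear.linear[OF bounded_linear_mult_right]\<close>)
    then show ?thesis using T_y[OF x] image by (simp add: has_field_derivative_def mult.commute)
  qed
  show ?thesis
  proof (rule that)
    show "y 0 = a" using y_T[of a] T0 \<open>a \<le> b\<close> by simp
    show "y T = b" using y_T[of b] \<open>a \<le> b\<close> by (simp add: T_def)
    show "y x < b" if "x \<in> {0..<T}" for x
      using T_y[of x] that by (fastforce simp: T_def le_less)
  qed (use T_y dy in blast)
qed

section \<open>The energy polynomial and the time integral\<close>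

definition energy_gap :: "real \<Rightarrow> real \<Rightarrow> real" where
  "energy_gap s y = (1 - y^2 + y^4/3) - s * (1 - 3/2*y^2 + y^4 - y^6/4)"

lemma G_diff_energy_gap: "G s - G (s * (1 - y^2)) = s^3 * y^2 * energy_gap s y"
  unfolding energy_gap_def G_def by (simp add: field_simps eval_nat_numeral)

lemma energy_gap_affine: "energy_gap ((1 - t) * a + t * b) y = (1 - t) * energy_gap a y + t * energy_gap b y"
  unfolding energy_gap_def by (simp add: algebra_simps diff_divide_distrib add_divide_distrib)

lemma energy_gap_bounds:
  assumes "s < 1" "0 \<le> y" "y \<le> 1"
  shows "0 < energy_gap s y" "energy_gap s y \<le> (y + sqrt (1 - s))^2"
proof -
  define t where "t = y^2"
  have t: "0 \<le> t" "t \<le> 1" using assms by (auto simp: t_def power_le_one)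
  define A where "A = t * (6 - 8*t + 3*t^2) / 12"
  define B where "B = 1 - 3/2*t + t^2 - t^3/4"
  have split: "energy_gap s y = A + (1 - s) * B"
    unfolding energy_gap_def A_def B_def t_def by (simp add: field_simps power_mult[symmetric])
  have "0 \<le> t * (3 * (t - 4/3)^2 + 2/3)" using t by simp
  then have A_ge: "0 \<le> A" by (simp add: A_def power2_eq_square algebra_simps)
  have "0 \<le> t * t * (8 - 3 * t)" using t by simp
  then have A_le: "A \<le> t / 2" by (simp add: A_def power2_eq_square algebra_simps)
  have "0 \<le> (1 - t) * ((t - 3/2)^2 + 3/4)" using t by simp
  then have B_ge: "1/4 \<le> B" by (simp add: B_def power2_eq_square algebra_simps power3_eq_cube)
  have "0 \<le> t * ((t - 2)^2 + 2)" using t by simp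
  then have B_le: "B \<le> 1" by (simp add: B_def power2_eq_square algebra_simps power3_eq_cube)
  have "0 < (1 - s) * B" using B_ge assms(1) by simp
  then show "0 < energy_gap s y" using A_ge split by simp
  have "(1 - s) * B \<le> (1 - s) * 1" using B_le assms(1) by (intro mult_left_mono) auto
  then have "energy_gap s y \<le> y^2 / 2 + (1 - s)" using A_le split t_def by simp
  also have "\<dots> \<le> (y + sqrt (1 - s))^2" using assms by (simp add: power2_sum)
  finally show "energy_gap s y \<le> (y + sqrt (1 - s))^2" .
qed

lemma continuous_on_energy_gap [continuous_intros]:
  "continuous_on A (\<lambda>y. energy_gap s y)"
  unfolding energy_gap_def by (intro continuous_intros) auto

definition time_integral :: "real \<Rightarrow> real" where
  "time_integral s = integral {0..1} (\<lambda>y. 1 / sqrt (energy_gap s y))"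

lemma time_integrand_integrable:
  "s < 1 \<Longrightarrow> (\<lambda>y. 1 / sqrt (energy_gap s y)) integrable_on {0..1}"
  by (intro integrable_continuous_interval continuous_intros) (auto dest: energy_gap_bounds(1))

lemma convex_on_inverse_sqrt: "convex_on {0<..} (\<lambda>z::real. 1 / sqrt z)"
proof (rule convex_on_realI[where f'="\<lambda>z. - 1 / (2 * z * sqrt z)"])
  fix x :: real assume "x \<in> {0<..}"
  then show "((\<lambda>z. 1 / sqrt z) has_real_derivative - 1 / (2 * x * sqrt x)) (at x)"
    by (auto intro!: derivative_eq_intros simp: field_simps)
next
  fix x y :: real assume xy: "x \<in> {0<..}" "y \<in> {0<..}" "x \<le> y"
  then have "2 * x * sqrt x \<le> 2 * y * sqrt y" by (intro mult_mono) auto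
  then show "- 1 / (2 * x * sqrt x) \<le> - 1 / (2 * y * sqrt y)"
    using xy by (simp add: frac_le)
qed simp

lemma convex_on_time_integral: "convex_on {..<1} time_integral"
proof (rule convex_onI)
  fix t a b :: real assume t: "0 < t" "t < 1" and ab: "a \<in> {..<1}" "b \<in> {..<1}"
  let ?f = "\<lambda>s y. 1 / sqrt (energy_gap s y)"
  have int: "(\<lambda>y. c * ?f s y) integrable_on {0..1}" if "s < 1" for c s
    using integrable_on_cmult_left[OF time_integrand_integrable[OF that], of c] by simp
  have "(1 - t) * a + t * b < 1"
    using ab t by (simp add: convex_bound_lt)
  then have "time_integral ((1 - t) * a + t * b) \<le> integral {0..1} (\<lambda>y. (1 - t) * ?f a y + t * ?f b y)"
    unfolding time_integral_def
  proof (intro integral_le time_integrand_integrable integrable_add int)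
    fix y :: real assume "y \<in> {0..1}"
    then have "energy_gap a y \<in> {0<..}" "energy_gap b y \<in> {0<..}"
      using ab energy_gap_bounds(1) by auto
    then show "?f ((1 - t) * a + t * b) y \<le> (1 - t) * ?f a y + t * ?f b y"
      using convex_onD[OF convex_on_inverse_sqrt, of t] t by (simp add: energy_gap_affine)
  qed (use ab in auto)
  also have "\<dots> = (1 - t) * time_integral a + t * time_integral b"
    using ab unfolding time_integral_def
    by (subst integral_add[OF int int]) (auto simp: integral_mult[OF time_integrand_integrable])
  finally show "time_integral ((1 - t) *\<^sub>R a + t *\<^sub>R b) \<le> (1 - t) * time_integral a + t * time_integral b"
    by simp
qed simp

lemma continuous_on_time_integral: "continuous_on {..<1} time_integral"
  using convex_on_continuous[OF _ convex_on_time_integral] by simp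

lemma time_integral_lower_bound:
  assumes "0 \<le> s" "s < 1"
  shows "ln (1 + 1 / sqrt (1 - s)) \<le> time_integral s"
proof -
  define e where "e = sqrt (1 - s)"
  have e: "0 < e" using assms by (simp add: e_def)
  have "((\<lambda>y. 1 / (y + e)) has_integral (ln (1 + e) - ln e)) {0..1}"
    using e by (intro fundamental_theorem_of_calculus[of 0 1 "\<lambda>y. ln (y + e)", simplified])
      (auto intro!: derivative_eq_intros simp: has_real_derivative_iff_has_vector_derivative[symmetric])
  then have "ln (1 + e) - ln e \<le> time_integral s"
    unfolding time_integral_def
  proof (rule has_integral_le[OF _ integrable_integral[OF time_integrand_integrable[OF assms(2)]]])
    fix y :: real assume y: "y \<in> {0..1}"
    then have "sqrt (energy_gap s y) \<le> y + e" "0 < sqrt (energy_gap s y)"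
      using energy_gap_bounds[OF assms(2), of y] e real_sqrt_le_mono by (fastforce simp: e_def)+
    then show "1 / (y + e) \<le> 1 / sqrt (energy_gap s y)"
      by (simp add: frac_le)
  qed
  also have "ln (1 + e) - ln e = ln (1 + 1 / e)"
    using e ln_div[of "1 + e" e] by (simp add: add_divide_distrib add.commute)
  finally show ?thesis unfolding e_def .
qed

lemma time_integral_pos:
  assumes "0 \<le> s" "s < 1"
  shows "0 < time_integral s"
proof -
  have "0 < ln (1 + 1 / sqrt (1 - s))" using assms by (intro ln_gt_zero) simp
  then show ?thesis using time_integral_lower_bound[OF assms] by linarith
qed

definition scaled_time :: "real \<Rightarrow> real" where
  "scaled_time s = time_integral s / sqrt s"

lemma continuous_on_scaled_time: "continuous_on {0<..<1} scaled_time"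
  unfolding scaled_time_def
  by (intro continuous_intros continuous_on_subset[OF continuous_on_time_integral]) auto

lemma scaled_time_lower_bound:
  assumes "0 < s" "s < 1"
  shows "ln (1 + 1 / sqrt (1 - s)) / sqrt s \<le> scaled_time s"
  unfolding scaled_time_def using assms time_integral_lower_bound[of s]
  by (intro divide_right_mono) auto

lemma filterlim_scaled_time_at_right_0: "filterlim scaled_time at_top (at_right 0)"
proof (rule filterlim_at_top_mono)
  show "filterlim (\<lambda>s. ln (1 + 1 / sqrt (1 - s)) / sqrt s) at_top (at_right 0)"
    by real_asymp
  show "\<forall>\<^sub>F s in at_right 0. ln (1 + 1 / sqrt (1 - s)) / sqrt s \<le> scaled_time s"
    by (rule eventually_at_rightI[of 0 1]) (auto intro: scaled_time_lower_bound)
qed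

lemma filterlim_scaled_time_at_left_1: "filterlim scaled_time at_top (at_left 1)"
proof (rule filterlim_at_top_mono)
  show "filterlim (\<lambda>s. ln (1 + 1 / sqrt (1 - s)) / sqrt s) at_top (at_left 1)"
    by real_asymp
  show "\<forall>\<^sub>F s in at_left 1. ln (1 + 1 / sqrt (1 - s)) / sqrt s \<le> scaled_time s"
    by (rule eventually_at_leftI[of 0]) (auto intro: scaled_time_lower_bound)
qed

lemma strictly_quasiconvex_on_scaled_time: "strictly_quasiconvex_on {0<..<1} scaled_time"
  unfolding scaled_time_def
  by (intro strictly_quasiconvex_on_div_sqrt convex_on_subset[OF convex_on_time_integral] time_integral_pos)
    auto

section \<open>The time map\<close>

lemma G_has_real_derivative: "(G has_real_derivative g x) (at x within S)"
  unfolding G_def g_def by (rule derivative_eq_intros refl | simp add: field_simps eval_nat_numeral)+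

lemma G_strict_mono:
  assumes "b < a" "a \<le> 1"
  shows "G b < G a"
proof -
  have G_less: "G p < G q" if "p < q" "q \<le> 1" "0 \<le> p \<or> q \<le> 0" for p q
  proof (rule DERIV_pos_imp_increasing_open[OF \<open>p < q\<close>])
    fix x assume "p < x" "x < q"
    then have "0 < g x" using that by (auto simp: g_def)
    then show "\<exists>d. (G has_real_derivative d) (at x) \<and> 0 < d" using G_has_real_derivative by blast
  qed (use G_has_real_derivative DERIV_continuous_on in blast)
  show ?thesis
  proof (cases "b < 0 \<and> 0 < a")
    case True
    then show ?thesis using G_less[of b 0] G_less[of 0 a] assms by simp
  qed (use G_less assms in auto)
qed

lemma is_sol_energy:
  assumes sol: "is_sol lam s t u v" and x: "x \<in> {0..t}"
  shows "v x^2 + 2 * lam * G (u x) = 2 * lam * G s"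
proof -
  have "\<exists>c. \<forall>x\<in>{0..t}. v x^2 + 2 * lam * G (u x) = c"
  proof (rule has_field_derivative_zero_constant)
    fix x assume x: "x \<in> {0..t}"
    have "((\<lambda>x. v x^2 + 2 * lam * G (u x)) has_real_derivative
            2 * v x * (- lam * g (u x)) + 2 * lam * (g (u x) * v x)) (at x within {0..t})"
      using sol x unfolding is_sol_def
      by (auto intro!: derivative_eq_intros DERIV_chain2[OF G_has_real_derivative])
    then show "((\<lambda>x. v x^2 + 2 * lam * G (u x)) has_real_derivative 0) (at x within {0..t})"
      by (simp add: algebra_simps)
  qed simp
  then show ?thesis using sol x unfolding is_sol_def by force
qed

text \<open>Along a solution, \<open>y = sqrt (1 - u / s)\<close> satisfies \<open>y' = rate lam s y\<close> and
  \<open>v = - 2 s y (rate lam s y)\<close>.\<close>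

definition rate :: "real \<Rightarrow> real \<Rightarrow> real \<Rightarrow> real" where
  "rate lam s y = sqrt (lam * s * energy_gap s y / 2)"

context
  fixes lam s :: real
  assumes lam: "0 < lam" and s: "0 < s" "s < 1"
begin

lemma rate_pos: "y \<in> {0..1} \<Longrightarrow> 0 < rate lam s y"
  using energy_gap_bounds(1)[of s y] lam s by (simp add: rate_def)

lemma continuous_on_rate: "continuous_on A (rate lam s)"
  unfolding rate_def by (intro continuous_intros) auto

lemma G_diff_rate:
  assumes "y \<in> {0..1}"
  shows "2 * lam * (G s - G (s * (1 - y^2))) = (2 * s * y * rate lam s y)^2"
proof -
  have "(rate lam s y)^2 = lam * s * energy_gap s y / 2"
    using energy_gap_bounds(1)[of s y] assms lam s by (simp add: rate_def)
  then have "(2 * s * y * rate lam s y)^2 = 2 * lam * (s^3 * y^2 * energy_gap s y)"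
    by (simp add: power_mult_distrib eval_nat_numeral)
  then show ?thesis by (simp add: G_diff_energy_gap)
qed

lemma velocity_has_real_derivative:
  assumes "y \<in> {0..1}"
  shows "((\<lambda>y. - 2 * s * y * rate lam s y) has_real_derivative
           - lam * g (s * (1 - y^2)) / rate lam s y) (at y)"
proof -
  define N' where "N' = (-2*y + 4*y^3/3) - s*(-3*y + 4*y^3 - 3/2*y^5)"
  define R where "R = rate lam s y"
  have R: "0 < R" "R^2 = lam * s * energy_gap s y / 2"
    using rate_pos[OF assms] energy_gap_bounds(1)[of s y] assms lam s by (auto simp: R_def rate_def)
  have dN: "((\<lambda>y. energy_gap s y) has_real_derivative N') (at y)"
    unfolding energy_gap_def N'_def
    by (rule derivative_eq_intros refl | simp add: field_simps eval_nat_numeral)+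
  have "(rate lam s has_real_derivative lam * s * N' / (4 * R)) (at y)"
    unfolding rate_def using R
    by (auto intro!: derivative_eq_intros dN simp: R_def rate_def field_simps)
  then have deriv: "((\<lambda>y. - 2 * s * y * rate lam s y) has_real_derivative
                 - 2 * s * (R + y * (lam * s * N' / (4 * R)))) (at y)"
    by (auto intro!: derivative_eq_intros simp: R_def algebra_simps)
  have "- 2 * s * (R + y * (lam * s * N' / (4 * R))) = - 2 * s * (R^2 + y * lam * s * N' / 4) / R"
    using R by (simp add: field_simps power2_eq_square)
  also have "\<dots> = - lam * g (s * (1 - y^2)) / R"
    using R(1) unfolding R(2) by (simp add: g_def energy_gap_def N'_def field_simps eval_nat_numeral)
  finally show ?thesis
    using deriv unfolding R_def by simp
qed

lemma hitting_solution_exists: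
  defines "T \<equiv> transit_time (rate lam s) 0 1"
  obtains u v where "is_sol lam s T u v" "u T = 0" "v T < 0" "\<And>\<tau>. \<tau> \<in> {0..<T} \<Longrightarrow> u \<tau> \<noteq> 0"
proof -
  obtain y where y0: "y 0 = 0" and y1: "y T = 1" and y_less: "\<And>x. x \<in> {0..<T} \<Longrightarrow> y x < 1"
    and y: "\<And>x. x \<in> {0..T} \<Longrightarrow> y x \<in> {0..1} \<and> (y has_real_derivative rate lam s (y x)) (at x within {0..T})"
    using transit_time_solution[of 0 1 "rate lam s"] continuous_on_rate rate_pos unfolding T_def by auto
  define u where "u x = s * (1 - (y x)^2)" for x
  define v where "v x = - 2 * s * y x * rate lam s (y x)" for x
  have "is_sol lam s T u v"
    unfolding is_sol_def
  proof (intro conjI ballI)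
    fix x assume x: "x \<in> {0..T}"
    note y_x = y[OF x]
    show "(u has_real_derivative v x) (at x within {0..T})"
      unfolding u_def v_def using y_x by (auto intro!: derivative_eq_intros)
    have "((\<lambda>x. - 2 * s * y x * rate lam s (y x)) has_real_derivative
            - lam * g (s * (1 - (y x)^2)) / rate lam s (y x) * rate lam s (y x)) (at x within {0..T})"
      using DERIV_chain2[OF velocity_has_real_derivative] y_x by blast
    moreover have "0 < rate lam s (y x)" using rate_pos y_x by blast
    ultimately show "(v has_real_derivative - lam * g (u x)) (at x within {0..T})"
      by (simp add: u_def v_def[abs_def])
  qed (simp_all add: u_def v_def y0)
  moreover have "v T < 0" using rate_pos[of 1] s by (simp add: v_def y1)
  moreover have "u \<tau> \<noteq> 0" if "\<tau> \<in> {0..<T}" for \<tau>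
  proof -
    have "0 \<le> y \<tau>" "y \<tau> < 1" using y_less[OF that] y[of \<tau>] that by auto
    then have "(y \<tau>)^2 < 1" by (simp add: power_less_one_iff)
    then show ?thesis using s by (simp add: u_def)
  qed
  ultimately show ?thesis using that by (simp add: u_def y1)
qed

lemma is_sol_le_start:
  assumes sol: "is_sol lam s t u v" and x: "x \<in> {0..t}"
  shows "u x \<le> s"
proof (rule ccontr)
  assume "\<not> u x \<le> s"
  then have w: "s < min (u x) 1" "min (u x) 1 \<le> u x" using s by auto
  have u0: "u 0 = s"
    and du: "\<And>\<tau>. \<tau> \<in> {0..t} \<Longrightarrow> (u has_real_derivative v \<tau>) (at \<tau> within {0..t})"
    using sol unfolding is_sol_def by auto
  have "continuous_on {0..t} u" using du by (rule DERIV_continuous_on)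
  then have "continuous_on {0..x} u" by (rule continuous_on_subset) (use x in auto)
  then obtain x' where x': "0 \<le> x'" "x' \<le> x" "u x' = min (u x) 1"
    using IVT'[of u 0 "min (u x) 1" x] w u0 x by auto
  have "x' \<in> {0..t}" using x x' by simp
  then have "v x'^2 + 2 * lam * G (u x') = 2 * lam * G s" by (rule is_sol_energy[OF sol])
  then have "lam * G (u x') \<le> lam * G s" using zero_le_power2[of "v x'"] by linarith
  moreover have "G s < G (u x')" using G_strict_mono w x' by simp
  ultimately show False using lam by simp
qed

lemma is_sol_velocity_neg:
  assumes sol: "is_sol lam s t u v" and x: "x \<in> {0<..t}"
  shows "v x < 0"
proof -
  have v0: "v 0 = 0"
    and dv: "\<And>\<tau>. \<tau> \<in> {0..t} \<Longrightarrow> (v has_real_derivative - lam * g (u \<tau>)) (at \<tau> within {0..t})"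
    using sol unfolding is_sol_def by auto
  have "- lam * g (u 0) < 0" using sol s lam by (simp add: is_sol_def g_def)
  moreover have "0 \<in> {0..t}" using x by simp
  ultimately obtain d where "d > 0" and d: "\<forall>h>0. 0 + h \<in> {0..t} \<longrightarrow> h < d \<longrightarrow> v (0 + h) < v 0"
    using has_real_derivative_neg_dec_right[OF dv] by blast
  define h where "h = min x (d / 2)"
  have h: "0 < h" "h \<le> x" "v h < 0"
    using \<open>d > 0\<close> x d v0 by (auto simp: h_def)
  have "v x \<le> v h"
  proof (rule DERIV_nonpos_imp_decreasing_open[OF \<open>h \<le> x\<close>])
    fix \<tau> assume "h < \<tau>" "\<tau> < x"
    then have \<tau>: "0 < \<tau>" "\<tau> < t" using h x by auto
    then have "u \<tau> \<le> s" using is_sol_le_start[OF sol] by simp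
    then have "0 \<le> g (u \<tau>)" using s by (simp add: g_def)
    moreover have "(v has_real_derivative - lam * g (u \<tau>)) (at \<tau>)"
      using dv[of \<tau>] \<tau> by (simp add: at_within_Icc_at)
    ultimately show "\<exists>d. (v has_real_derivative d) (at \<tau>) \<and> d \<le> 0"
      using lam by auto
  next
    have "continuous_on {0..t} v" using dv by (rule DERIV_continuous_on)
    then show "continuous_on {h..x} v"
      by (rule continuous_on_subset) (use h x in auto)
  qed
  then show ?thesis using h by linarith
qed

lemma is_sol_hitting_time:
  assumes sol: "is_sol lam s t u v" and t: "0 < t" "u t = 0"
  shows "t = transit_time (rate lam s) 0 1"
proof -
  have u0: "u 0 = s"
    and du: "\<And>\<tau>. \<tau> \<in> {0..t} \<Longrightarrow> (u has_real_derivative v \<tau>) (at \<tau> within {0..t})"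
    using sol unfolding is_sol_def by auto
  have cont_u: "continuous_on {0..t} u" using du by (rule DERIV_continuous_on)
  have u_less: "u x' < u x" if "0 \<le> x" "x < x'" "x' \<le> t" for x x'
  proof (rule DERIV_neg_imp_decreasing_open[OF \<open>x < x'\<close>])
    fix \<tau> assume "x < \<tau>" "\<tau> < x'"
    then show "\<exists>d. (u has_real_derivative d) (at \<tau>) \<and> d < 0"
      using du[of \<tau>] is_sol_velocity_neg[OF sol, of \<tau>] that by (auto simp: at_within_Icc_at)
  qed (use continuous_on_subset[OF cont_u] that in auto)
  define y where "y x = sqrt (1 - u x / s)" for x
  have u_y: "u x = s * (1 - (y x)^2)" and y_range: "y x \<in> {0..1}" if "x \<in> {0..t}" for x
  proof -
    have "0 \<le> u x" using u_less[of x t] that t by (cases "x = t") auto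
    moreover have "u x \<le> s" using is_sol_le_start[OF sol that] .
    ultimately show "u x = s * (1 - (y x)^2)" "y x \<in> {0..1}" using s by (auto simp: y_def)
  qed
  have "(y has_real_derivative rate lam s (y x)) (at x)" if x: "0 < x" "x < t" for x
  proof -
    have "0 < u x" "u x < s" using u_less[of x t] u_less[of 0 x] x t u0 by auto
    then have y_pos: "0 < y x" "0 < 1 - u x / s" using s by (auto simp: y_def)
    have "(v x)^2 + 2 * lam * G (u x) = 2 * lam * G s" using is_sol_energy[OF sol] x by simp
    moreover have "2 * lam * (G s - G (u x)) = (2 * s * y x * rate lam s (y x))^2"
      using G_diff_rate[OF y_range] u_y x by simp
    ultimately have "(v x)^2 = (2 * s * y x * rate lam s (y x))^2"
      unfolding right_diff_distrib by linarith
    moreover have "v x < 0" using is_sol_velocity_neg[OF sol] x by simp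
    moreover have "0 < 2 * s * y x * rate lam s (y x)" using rate_pos y_range[of x] y_pos x s by simp
    ultimately have v_y: "v x = - 2 * s * y x * rate lam s (y x)"
      using power2_eq_iff by fastforce
    have "(y has_real_derivative - (v x / s) / (2 * y x)) (at x)"
      unfolding y_def using du[of x] x y_pos s
      by (auto intro!: derivative_eq_intros simp: at_within_Icc_at y_def divide_simps)
    then show ?thesis using y_pos s by (simp add: v_y)
  qed
  then show ?thesis
    using y_range t u0 s continuous_on_rate rate_pos
    by (intro transit_time_unique[where y = y]) (auto simp: y_def intro!: continuous_intros cont_u)
qed

lemma T0_eq_transit_time: "T0 lam s = transit_time (rate lam s) 0 1"
  unfolding T0_def
proof (rule the_equality)
  let ?T = "transit_time (rate lam s) 0 1"
  have "transit_time (rate lam s) 0 0 < ?T"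
    using continuous_on_rate rate_pos by (intro transit_time_strict_mono) auto
  then have "0 < ?T" by (simp add: transit_time_def)
  moreover obtain u v where "is_sol lam s ?T u v" "u ?T = 0" "v ?T < 0" "\<And>\<tau>. \<tau> \<in> {0..<?T} \<Longrightarrow> u \<tau> \<noteq> 0"
    using hitting_solution_exists by blast
  ultimately show "0 < ?T \<and> (\<exists>u v. is_sol lam s ?T u v \<and> u ?T = 0 \<and> v ?T < 0 \<and>
                     (\<forall>\<tau>\<in>{0..<?T}. u \<tau> \<noteq> 0 \<or> 0 \<le> v \<tau>))"
    by blast
qed (use is_sol_hitting_time in blast)

lemma transit_time_rate: "transit_time (rate lam s) 0 1 = scaled_time s / sqrt (lam / 2)"
proof -
  have rate_eq: "rate lam s y = sqrt (energy_gap s y) * (sqrt (lam / 2) * sqrt s)" for y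
    by (simp add: rate_def real_sqrt_mult[symmetric] mult_ac)
  have "transit_time (rate lam s) 0 1 = integral {0..1} (\<lambda>y. 1 / sqrt (energy_gap s y)) / (sqrt (lam / 2) * sqrt s)"
    unfolding transit_time_def by (simp only: rate_eq divide_divide_eq_left[symmetric] integral_divide)
  then show ?thesis
    by (simp add: scaled_time_def time_integral_def mult.commute)
qed

end

lemma I0_eq_superlevel_set:
  assumes "0 < lam"
  shows "I0 \<sigma> lam = {s \<in> {0<..<1}. \<sigma> * sqrt (lam / 2) < scaled_time s}"
proof -
  have "\<sigma> < T0 lam s \<longleftrightarrow> \<sigma> * sqrt (lam / 2) < scaled_time s" if "s \<in> {0<..<1}" for s
    using T0_eq_transit_time transit_time_rate assms that by (simp add: pos_less_divide_eq)
  then show ?thesis unfolding I0_def by auto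
qed

theorem proposition2p1:
  fixes \<sigma> :: real
  assumes "0 < \<sigma>" "\<sigma> < 1/2"
  shows "\<exists>lamstar > 0. \<exists>sstar. 0 < sstar \<and> sstar < 1 \<and>
    (\<forall>lam. 0 < lam \<and> lam < lamstar \<longrightarrow> I0 \<sigma> lam = {0<..<1}) \<and>
    I0 \<sigma> lamstar = {0<..<1} - {sstar} \<and>
    (\<forall>lam > lamstar. \<exists>s0 s1. 0 < s0 \<and> s0 < sstar \<and> sstar < s1 \<and> s1 < 1 \<and>
        I0 \<sigma> lam = {0<..<s0} \<union> {s1<..<1})"
proof -
  obtain m where m: "m \<in> {0<..<1}"
    and below: "\<And>c. c < scaled_time m \<Longrightarrow> {s \<in> {0<..<1}. c < scaled_time s} = {0<..<1}"
    and at: "{s \<in> {0<..<1}. scaled_time m < scaled_time s} = {0<..<1} - {m}"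
    and above: "\<And>c. scaled_time m < c \<Longrightarrow> \<exists>s0 s1. 0 < s0 \<and> s0 < m \<and> m < s1 \<and> s1 < 1 \<and>
                  {s \<in> {0<..<1}. c < scaled_time s} = {0<..<s0} \<union> {s1<..<1}"
    using coercive_strictly_quasiconvex_superlevel_sets[OF strictly_quasiconvex_on_scaled_time
        continuous_on_scaled_time filterlim_scaled_time_at_right_0 filterlim_scaled_time_at_left_1]
    by auto
  define lamstar where "lamstar = 2 * (scaled_time m / \<sigma>)^2"
  have "0 < scaled_time m" using time_integral_pos m by (simp add: scaled_time_def)
  then have lamstar: "0 < lamstar" "\<sigma> * sqrt (lamstar / 2) = scaled_time m"
    using assms(1) by (simp_all add: lamstar_def real_sqrt_divide)
  have level_less: "\<sigma> * sqrt (lam / 2) < \<sigma> * sqrt (lam' / 2) \<longleftrightarrow> lam < lam'" for lam lam'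
    using assms(1) by simp
  show ?thesis
  proof (rule exI[of _ lamstar], rule conjI[OF lamstar(1)], rule exI[of _ m], intro conjI allI impI)
    fix lam assume "0 < lam \<and> lam < lamstar"
    then show "I0 \<sigma> lam = {0<..<1}"
      using below[of "\<sigma> * sqrt (lam / 2)"] level_less[of lam lamstar] lamstar
      by (simp add: I0_eq_superlevel_set)
  next
    fix lam assume "lamstar < lam"
    then show "\<exists>s0 s1. 0 < s0 \<and> s0 < m \<and> m < s1 \<and> s1 < 1 \<and> I0 \<sigma> lam = {0<..<s0} \<union> {s1<..<1}"
      using above[of "\<sigma> * sqrt (lam / 2)"] level_less[of lamstar lam] lamstar
      by (simp add: I0_eq_superlevel_set)
  qed (use m at lamstar in \<open>simp_all add: I0_eq_superlevel_set\<close>)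
qed

end
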